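(* Let $F$ be a minimally unsatisfiable clause-set and $v\neq w$ two non-1-singular variables for $F$. Let $C$ be the main clause for $v$ and $D$ the main clause for $w$. 1. If $C = D$, then $w$ is not singular for $\mathrm{DP}_v(F)$ and $v$ is not singular for $\mathrm{DP}_w(F)$. 2. If $C\neq D$, then $w$ is non-1-singular for $\mathrm{DP}_v(F)$ and $v$ is non-1-singular for $\mathrm{DP}_w(F)$.
   Context: Literals are variables $v$ and complements $\overline{v}$; a clause is a finite set of literals with no complementary pair; a clause-set is a finite set of clauses; $\mathrm{ldeg}_F(x)$ is the number of clauses of $F$ containing literal $x$. $\mathrm{DP}_v(F) := \{C \in F : v \notin \mathrm{var}(C)\} \cup \{(C \cup D)\setminus\{v,\overline{v}\} : C, D \in F,\ C \cap \overline{D} = \{v\}\}$. A variable $v$ is singular for $F$ if $\min(\mathrm{ldeg}_F(v),\mathrm{ldeg}_F(\overline{v}))=1$; it is 1-singular if $\mathrm{ldeg}_F(v)=\mathrm{ldeg}_F(\overline{v})=1$, and non-1-singular if it is singular but not 1-singular. For a non-1-singular variable $v$ the singular literal is the unique literal $x$ with underlying variable $v$ and $\mathrm{ldeg}_F(x)=1$, and the main clause is the unique clause of $F$ containing $x$. *)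

theory Defs
  imports Main
begin

datatype 'v lit = Pos 'v | Neg 'v

fun var :: "'v lit \<Rightarrow> 'v" where
  "var (Pos v) = v" | "var (Neg v) = v"

fun comp :: "'v lit \<Rightarrow> 'v lit" where
  "comp (Pos v) = Neg v" | "comp (Neg v) = Pos v"

type_synonym 'v clause = "'v lit set"

definition is_clause :: "'v clause \<Rightarrow> bool" where
  "is_clause C \<longleftrightarrow> finite C \<and> (\<forall>x\<in>C. comp x \<notin> C)"

definition is_clause_set :: "'v clause set \<Rightarrow> bool" where
  "is_clause_set F \<longleftrightarrow> finite F \<and> (\<forall>C\<in>F. is_clause C)"

definition vars_cl :: "'v clause \<Rightarrow> 'v set" where
  "vars_cl C = var ` C"

fun sat_lit :: "('v \<Rightarrow> bool) \<Rightarrow> 'v lit \<Rightarrow> bool" where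
  "sat_lit \<phi> (Pos v) = \<phi> v" | "sat_lit \<phi> (Neg v) = (\<not> \<phi> v)"

definition satisfiable :: "'v clause set \<Rightarrow> bool" where
  "satisfiable F \<longleftrightarrow> (\<exists>\<phi>. \<forall>C\<in>F. \<exists>x\<in>C. sat_lit \<phi> x)"

definition min_unsat :: "'v clause set \<Rightarrow> bool" where
  "min_unsat F \<longleftrightarrow> is_clause_set F \<and> \<not> satisfiable F \<and> (\<forall>F'. F' \<subset> F \<longrightarrow> satisfiable F')"

definition ldeg :: "'v clause set \<Rightarrow> 'v lit \<Rightarrow> nat" where
  "ldeg F x = card {C \<in> F. x \<in> C}"

definition DP :: "'v \<Rightarrow> 'v clause set \<Rightarrow> 'v clause set" where
  "DP v F = {C \<in> F. v \<notin> vars_cl C} \<union>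
     {(C \<union> D) - {Pos v, Neg v} | C D. C \<in> F \<and> D \<in> F \<and> C \<inter> comp ` D = {Pos v}}"

definition singular :: "'v clause set \<Rightarrow> 'v \<Rightarrow> bool" where
  "singular F v \<longleftrightarrow> min (ldeg F (Pos v)) (ldeg F (Neg v)) = 1"

definition one_singular :: "'v clause set \<Rightarrow> 'v \<Rightarrow> bool" where
  "one_singular F v \<longleftrightarrow> ldeg F (Pos v) = 1 \<and> ldeg F (Neg v) = 1"

definition non1_singular :: "'v clause set \<Rightarrow> 'v \<Rightarrow> bool" where
  "non1_singular F v \<longleftrightarrow> singular F v \<and> \<not> one_singular F v"

(* for non-1-singular v: the unique literal over v of degree 1 *)
definition singular_lit :: "'v clause set \<Rightarrow> 'v \<Rightarrow> 'v lit" where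
  "singular_lit F v = (THE x. var x = v \<and> ldeg F x = 1)"

definition main_clause :: "'v clause set \<Rightarrow> 'v \<Rightarrow> 'v clause" where
  "main_clause F v = (THE C. C \<in> F \<and> singular_lit F v \<in> C)"

end

theory Submission
  imports Defs
begin

text \<open>
  Let \<open>x\<close> be the singular literal of \<open>v\<close> and \<open>C\<close> its main clause. By minimal
  unsatisfiability every clause \<open>E \<ni> \<not>x\<close> clashes with \<open>C\<close> only in \<open>x\<close>, and the resolvents
  \<open>(C \<union> E) - {v, \<not>v}\<close> are pairwise distinct and do not occur in \<open>F\<close>. Hence \<open>DP\<^sub>v(F)\<close>
  consists of the \<open>v\<close>-free clauses of \<open>F\<close> plus one new resolvent for each \<open>E \<ni> \<not>x\<close>, so
  a literal over another variable keeps its degree if it is not in \<open>C\<close>, and gets degree at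
  least \<open>ldeg\<^sub>F(\<not>x) \<ge> 2\<close> if it is in \<open>C\<close>. For the singular literal \<open>y\<close> of \<open>w\<close>: if
  \<open>C = D\<close> then \<open>y \<in> C\<close> and both \<open>y\<close>, \<open>\<not>y\<close> end up with degree \<open>\<ge> 2\<close>; otherwise \<open>y \<notin> C\<close>
  keeps degree 1 while \<open>\<not>y\<close> keeps degree \<open>\<ge> 2\<close>.
\<close>

lemma comp_comp [simp]: "comp (comp l) = l"
  by (cases l) auto

lemma var_comp [simp]: "var (comp l) = var l"
  by (cases l) auto

lemma sat_lit_comp [simp]: "sat_lit \<phi> (comp l) \<longleftrightarrow> \<not> sat_lit \<phi> l"
  by (cases l) auto

lemma mem_comp_image_iff: "z \<in> comp ` B \<longleftrightarrow> comp z \<in> B"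
  by (metis comp_comp image_iff)

lemma var_eq_iff: "var a = var b \<longleftrightarrow> a = b \<or> a = comp b"
  by (cases a; cases b) auto

lemma mem_Pos_Neg_iff: "l \<in> {Pos v, Neg v} \<longleftrightarrow> var l = v"
  by (cases l) auto

lemma sat_lit_fun_upd: "var l \<noteq> u \<Longrightarrow> sat_lit (\<phi>(u := b)) l = sat_lit \<phi> l"
  by (cases l) auto

lemma var_in_vars_cl_iff: "var x \<in> vars_cl E \<longleftrightarrow> x \<in> E \<or> comp x \<in> E"
  unfolding vars_cl_def by (metis image_iff var_comp var_eq_iff)

lemma min_unsat_finite: "min_unsat F \<Longrightarrow> finite F"
  unfolding min_unsat_def is_clause_set_def by blast

lemma min_unsat_no_clash: "min_unsat F \<Longrightarrow> C \<in> F \<Longrightarrow> x \<in> C \<Longrightarrow> comp x \<notin> C"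
  unfolding min_unsat_def is_clause_set_def is_clause_def by blast

lemma min_unsat_var_unique:
  assumes "min_unsat F" "C \<in> F" "x \<in> C" "l \<in> C" "var l = var x"
  shows "l = x"
  using assms min_unsat_no_clash var_eq_iff by blast

lemma min_unsat_clause_necessary:
  assumes "min_unsat F" "D \<in> F"
  obtains \<phi> where "\<forall>E\<in>F - {D}. \<exists>l\<in>E. sat_lit \<phi> l" "\<forall>l\<in>D. \<not> sat_lit \<phi> l"
proof -
  have "F - {D} \<subset> F" using assms(2) by blast
  then obtain \<phi> where \<phi>: "\<forall>E\<in>F - {D}. \<exists>l\<in>E. sat_lit \<phi> l"
    using assms(1) unfolding min_unsat_def satisfiable_def by blast
  moreover have "\<forall>l\<in>D. \<not> sat_lit \<phi> l"
    using \<phi> assms unfolding min_unsat_def satisfiable_def by blast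
  ultimately show thesis using that by blast
qed

text \<open>
  Flipping \<open>var x\<close> so that \<open>comp x\<close> becomes true repairs every clause containing \<open>comp x\<close> and
  can only break clauses containing \<open>x\<close>, i.e.\ at most \<open>C\<close>, which stays satisfied through \<open>l\<close>.
\<close>
lemma satisfiable_by_flip:
  assumes only_C: "{E\<in>F. x \<in> E} \<subseteq> {C}"
    and sat: "\<forall>E\<in>F - {C}. comp x \<notin> E \<longrightarrow> (\<exists>l\<in>E. sat_lit \<phi> l)"
    and l: "l \<in> C" "var l \<noteq> var x" "sat_lit \<phi> l"
  shows "satisfiable F"
proof -
  obtain b where b: "sat_lit (\<phi>(var x := b)) (comp x)"
    by (cases x) auto
  have "\<exists>l\<in>E. sat_lit (\<phi>(var x := b)) l" if E: "E \<in> F" for E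
  proof (cases "comp x \<in> E \<or> E = C")
    case True
    then show ?thesis using b l sat_lit_fun_upd by metis
  next
    case False
    then obtain k where k: "k \<in> E" "sat_lit \<phi> k" using sat E by blast
    have "x \<notin> E" using only_C E False by blast
    then have "var k \<noteq> var x" using k(1) False by (auto simp: var_eq_iff)
    then show ?thesis using k sat_lit_fun_upd by metis
  qed
  then show ?thesis unfolding satisfiable_def by blast
qed

definition resolvent :: "'v \<Rightarrow> 'v clause \<Rightarrow> 'v clause \<Rightarrow> 'v clause" where
  "resolvent v C E = (C \<union> E) - {Pos v, Neg v}"

lemma mem_resolvent_iff: "var l \<noteq> v \<Longrightarrow> l \<in> resolvent v C E \<longleftrightarrow> l \<in> C \<or> l \<in> E"
  unfolding resolvent_def by (cases l) auto

lemma resolvent_commute: "resolvent v C E = resolvent v E C"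
  unfolding resolvent_def by blast

lemma min_unsat_unique_clash:
  assumes mu: "min_unsat F" and only_C: "{E\<in>F. x \<in> E} = {C}"
    and E: "E \<in> F" "comp x \<in> E" and z: "z \<in> C" "comp z \<in> E"
  shows "z = x"
proof (rule ccontr)
  assume "z \<noteq> x"
  moreover have "C \<in> F" "x \<in> C" using only_C by auto
  ultimately have "var z \<noteq> var x" using min_unsat_var_unique mu z(1) by metis
  obtain \<phi> where \<phi>: "\<forall>E'\<in>F - {E}. \<exists>l\<in>E'. sat_lit \<phi> l" "\<forall>l\<in>E. \<not> sat_lit \<phi> l"
    using min_unsat_clause_necessary[OF mu E(1)] .
  have "satisfiable F"
  proof (rule satisfiable_by_flip[of F x C \<phi> z])
    show "\<forall>E'\<in>F - {C}. comp x \<notin> E' \<longrightarrow> (\<exists>l\<in>E'. sat_lit \<phi> l)"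
      using \<phi>(1) E(2) by blast
    show "sat_lit \<phi> z" using \<phi>(2) z(2) by force
  qed (use only_C z(1) \<open>var z \<noteq> var x\<close> in auto)
  then show False using mu unfolding min_unsat_def by blast
qed

text \<open>
  An assignment falsifying only the resolvent would have to satisfy \<open>C\<close> and \<open>E\<close> through
  the eliminated literals, i.e.\ through both \<open>x\<close> and \<open>comp x\<close>.
\<close>
lemma resolvent_notin_min_unsat:
  assumes mu: "min_unsat F" and C: "C \<in> F" "x \<in> C" and E: "E \<in> F" "comp x \<in> E"
  shows "resolvent (var x) C E \<notin> F"
proof
  let ?R = "resolvent (var x) C E"
  assume "?R \<in> F"
  then obtain \<phi> where \<phi>: "\<forall>E'\<in>F - {?R}. \<exists>l\<in>E'. sat_lit \<phi> l" "\<forall>l\<in>?R. \<not> sat_lit \<phi> l"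
    using min_unsat_clause_necessary[OF mu] by blast
  have "x \<in> {Pos (var x), Neg (var x)}" "comp x \<in> {Pos (var x), Neg (var x)}"
    by (simp_all only: mem_Pos_Neg_iff var_comp)
  then have "x \<notin> ?R" "comp x \<notin> ?R" unfolding resolvent_def by blast+
  then have "C \<in> F - {?R}" "E \<in> F - {?R}" using C E by auto
  then obtain a b where a: "a \<in> C" "sat_lit \<phi> a" and b: "b \<in> E" "sat_lit \<phi> b"
    using \<phi>(1) by meson
  have "a \<notin> ?R" "b \<notin> ?R" using a b \<phi>(2) by blast+
  then have "a \<in> {Pos (var x), Neg (var x)}" "b \<in> {Pos (var x), Neg (var x)}"
    using a(1) b(1) unfolding resolvent_def by blast+
  then have "var a = var x" "var b = var (comp x)"
    by (simp_all only: mem_Pos_Neg_iff var_comp)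
  then have "a = x" "b = comp x"
    using min_unsat_var_unique[OF mu C a(1)] min_unsat_var_unique[OF mu E b(1)] by blast+
  then show False using a(2) b(2) by simp
qed

text \<open>
  Falsify only \<open>E1\<close>: a true literal of \<open>E2\<close> over another variable lies in the common
  resolvent, hence in \<open>C\<close>, and flipping \<open>x\<close> yields a model of \<open>F\<close>.
\<close>
lemma inj_on_resolvent_min_unsat:
  assumes mu: "min_unsat F" and only_C: "{E\<in>F. x \<in> E} = {C}"
  shows "inj_on (resolvent (var x) C) {E\<in>F. comp x \<in> E}"
proof (rule inj_onI, rule ccontr)
  fix E1 E2
  assume E1: "E1 \<in> {E\<in>F. comp x \<in> E}" and E2: "E2 \<in> {E\<in>F. comp x \<in> E}"
    and eq: "resolvent (var x) C E1 = resolvent (var x) C E2" and "E1 \<noteq> E2"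
  obtain \<phi> where \<phi>: "\<forall>E'\<in>F - {E1}. \<exists>l\<in>E'. sat_lit \<phi> l" "\<forall>l\<in>E1. \<not> sat_lit \<phi> l"
    using min_unsat_clause_necessary[OF mu] E1 by blast
  obtain l where l: "l \<in> E2" "sat_lit \<phi> l" using \<phi>(1) E2 \<open>E1 \<noteq> E2\<close> by blast
  have "l \<noteq> comp x" using l \<phi>(2) E1 by blast
  moreover have "l \<noteq> x" using min_unsat_no_clash[OF mu, of E2 "comp x"] E2 l(1) by auto
  ultimately have vl: "var l \<noteq> var x" by (auto simp: var_eq_iff)
  then have "l \<in> C" using eq l \<phi>(2) mem_resolvent_iff by metis
  have "satisfiable F"
    by (rule satisfiable_by_flip[of F x C \<phi> l]) (use only_C \<phi>(1) E1 \<open>l \<in> C\<close> vl l(2) in auto)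
  then show False using mu unfolding min_unsat_def by blast
qed

lemma min_unsat_clash_iff:
  assumes mu: "min_unsat F" and only_C: "{E\<in>F. x \<in> E} = {C}" and A: "A \<in> F" and B: "B \<in> F"
  shows "A \<inter> comp ` B = {Pos (var x)} \<longleftrightarrow> Pos (var x) \<in> A \<and> Neg (var x) \<in> B"
proof
  assume "A \<inter> comp ` B = {Pos (var x)}"
  then have "Pos (var x) \<in> A" "comp (Pos (var x)) \<in> B"
    using mem_comp_image_iff by blast+
  then show "Pos (var x) \<in> A \<and> Neg (var x) \<in> B" by simp
next
  assume PN: "Pos (var x) \<in> A \<and> Neg (var x) \<in> B"
  have "z = Pos (var x)" if z: "z \<in> A" "comp z \<in> B" for z
  proof (cases x)
    case (Pos u)
    then have "A = C" "comp x \<in> B" using only_C A PN by auto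
    then have "z = x" using min_unsat_unique_clash[OF mu only_C B] z by blast
    then show ?thesis using Pos by simp
  next
    case (Neg u)
    then have "B = C" "comp x \<in> A" using only_C B PN by auto
    then have "comp z = x" using min_unsat_unique_clash[OF mu only_C A] z by simp
    then show ?thesis using Neg by (metis comp.simps(2) comp_comp var.simps(2))
  qed
  moreover have "Pos (var x) \<in> comp ` B"
    using PN mem_comp_image_iff[of "Pos (var x)" B] by simp
  ultimately show "A \<inter> comp ` B = {Pos (var x)}"
    using PN mem_comp_image_iff[of _ B] by blast
qed

lemma resolvents_Pos_Neg_eq:
  "{resolvent (var x) A B | A B. A \<in> F \<and> Pos (var x) \<in> A \<and> B \<in> F \<and> Neg (var x) \<in> B}
   = {resolvent (var x) A B | A B. A \<in> F \<and> x \<in> A \<and> B \<in> F \<and> comp x \<in> B}"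
proof (cases x)
  case (Neg u)
  then show ?thesis by auto (metis resolvent_commute)+
qed simp

lemma DP_eq_resolvents_main_clause:
  assumes mu: "min_unsat F" and only_C: "{E\<in>F. x \<in> E} = {C}"
  shows "DP (var x) F = {E\<in>F. var x \<notin> vars_cl E} \<union> resolvent (var x) C ` {E\<in>F. comp x \<in> E}"
proof -
  let ?v = "var x"
  have C_iff: "A \<in> F \<and> x \<in> A \<longleftrightarrow> A = C" for A
    using only_C by blast
  have "{(A \<union> B) - {Pos ?v, Neg ?v} | A B. A \<in> F \<and> B \<in> F \<and> A \<inter> comp ` B = {Pos ?v}}
      = {resolvent ?v A B | A B. A \<in> F \<and> Pos ?v \<in> A \<and> B \<in> F \<and> Neg ?v \<in> B}"
    unfolding resolvent_def
    by (simp only: min_unsat_clash_iff[OF mu only_C] conj_ac cong: conj_cong)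
  also have "\<dots> = {resolvent ?v A B | A B. A \<in> F \<and> x \<in> A \<and> B \<in> F \<and> comp x \<in> B}"
    by (rule resolvents_Pos_Neg_eq)
  also have "\<dots> = resolvent ?v C ` {E\<in>F. comp x \<in> E}"
    by (simp only: conj_assoc[symmetric] C_iff) blast
  finally show ?thesis unfolding DP_def by simp
qed

lemma ldeg_DP_main_clause:
  assumes mu: "min_unsat F" and only_C: "{E\<in>F. x \<in> E} = {C}" and l: "var l \<noteq> var x"
  shows "ldeg (DP (var x) F) l =
    card {E\<in>F. var x \<notin> vars_cl E \<and> l \<in> E} + card {E\<in>F. comp x \<in> E \<and> l \<in> C \<union> E}"
proof -
  let ?r = "resolvent (var x) C"
  let ?A = "{E\<in>F. var x \<notin> vars_cl E \<and> l \<in> E}"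
  let ?B = "{E\<in>F. comp x \<in> E \<and> l \<in> C \<union> E}"
  have C: "C \<in> F" "x \<in> C" using only_C by auto
  have "{G \<in> DP (var x) F. l \<in> G} = ?A \<union> ?r ` ?B"
    unfolding DP_eq_resolvents_main_clause[OF mu only_C] using mem_resolvent_iff[OF l] by auto
  moreover have "?A \<inter> ?r ` ?B = {}"
    using resolvent_notin_min_unsat[OF mu C] by blast
  moreover have "inj_on ?r ?B"
    using inj_on_resolvent_min_unsat[OF mu only_C] by (rule inj_on_subset) blast
  moreover have "finite F" using min_unsat_finite[OF mu] .
  ultimately show ?thesis
    unfolding ldeg_def by (simp add: card_Un_disjoint card_image)
qed

lemma ldeg_DP_notin_main_clause:
  assumes mu: "min_unsat F" and only_C: "{E\<in>F. x \<in> E} = {C}"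
    and l: "var l \<noteq> var x" "l \<notin> C"
  shows "ldeg (DP (var x) F) l = ldeg F l"
proof -
  let ?A = "{E\<in>F. var x \<notin> vars_cl E \<and> l \<in> E}"
  let ?B = "{E\<in>F. comp x \<in> E \<and> l \<in> C \<union> E}"
  have "{E\<in>F. l \<in> E} = ?A \<union> ?B"
    using only_C l(2) var_in_vars_cl_iff[of x] by blast
  moreover have "?A \<inter> ?B = {}"
    using var_in_vars_cl_iff[of x] by blast
  ultimately have "ldeg F l = card ?A + card ?B"
    unfolding ldeg_def using min_unsat_finite[OF mu] by (simp add: card_Un_disjoint)
  then show ?thesis using ldeg_DP_main_clause[OF mu only_C l(1)] by simp
qed

lemma ldeg_DP_in_main_clause:
  assumes mu: "min_unsat F" and only_C: "{E\<in>F. x \<in> E} = {C}"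
    and l: "var l \<noteq> var x" "l \<in> C"
  shows "ldeg F (comp x) \<le> ldeg (DP (var x) F) l"
proof -
  have "{E\<in>F. comp x \<in> E \<and> l \<in> C \<union> E} = {E\<in>F. comp x \<in> E}"
    using l(2) by blast
  then show ?thesis
    using ldeg_DP_main_clause[OF mu only_C l(1)] unfolding ldeg_def by simp
qed

lemma ldeg_DP_lower_bound:
  assumes mu: "min_unsat F" and only_C: "{E\<in>F. x \<in> E} = {C}" and l: "var l \<noteq> var x"
    and "k \<le> ldeg F (comp x)" "k \<le> ldeg F l"
  shows "k \<le> ldeg (DP (var x) F) l"
  using assms ldeg_DP_in_main_clause[OF mu only_C l] ldeg_DP_notin_main_clause[OF mu only_C l]
  by (cases "l \<in> C") auto

lemma singular_var_iff: "singular G (var y) \<longleftrightarrow> min (ldeg G y) (ldeg G (comp y)) = 1"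
  unfolding singular_def by (cases y) (auto simp: min.commute)

lemma one_singular_var_iff: "one_singular G (var y) \<longleftrightarrow> ldeg G y = 1 \<and> ldeg G (comp y) = 1"
  unfolding one_singular_def by (cases y) auto

lemma non1_singularE:
  assumes "non1_singular F v"
  obtains x where "var x = v" "ldeg F x = 1" "2 \<le> ldeg F (comp x)"
proof (cases "ldeg F (Pos v) = 1")
  case True
  then show thesis
    using assms that[of "Pos v"] unfolding non1_singular_def singular_def one_singular_def
    by (auto simp: min_def split: if_splits)
next
  case False
  then show thesis
    using assms that[of "Neg v"] unfolding non1_singular_def singular_def one_singular_def
    by (auto simp: min_def split: if_splits)
qed

lemma non1_singular_main_clause:
  assumes "non1_singular F v"
  obtains x where "var x = v" "{E\<in>F. x \<in> E} = {main_clause F v}" "ldeg F x = 1"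
    "2 \<le> ldeg F (comp x)"
proof -
  obtain x where x: "var x = v" "ldeg F x = 1" "2 \<le> ldeg F (comp x)"
    using non1_singularE[OF assms] .
  obtain C where only_C: "{E\<in>F. x \<in> E} = {C}"
    using x(2) unfolding ldeg_def by (rule card_1_singletonE)
  have "singular_lit F v = x"
    unfolding singular_lit_def
  proof (rule the_equality)
    fix z assume "var z = v \<and> ldeg F z = 1"
    then show "z = x" using x var_eq_iff[of z x] by auto
  qed (use x in simp)
  then have "main_clause F v = C"
    unfolding main_clause_def by (intro the_equality) (use only_C in auto)
  then show thesis using that x only_C by simp
qed

lemma not_singular_DP_main_clause:
  assumes mu: "min_unsat F" and only_C: "{E\<in>F. x \<in> E} = {C}" and x: "2 \<le> ldeg F (comp x)"
    and y: "var y \<noteq> var x" "y \<in> C" "2 \<le> ldeg F (comp y)"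
  shows "\<not> singular (DP (var x) F) (var y)"
proof -
  have "2 \<le> ldeg (DP (var x) F) y"
    using x ldeg_DP_in_main_clause[OF mu only_C y(1,2)] by linarith
  moreover have "2 \<le> ldeg (DP (var x) F) (comp y)"
    using ldeg_DP_lower_bound[OF mu only_C _ x] y by simp
  ultimately show ?thesis unfolding singular_var_iff by linarith
qed

lemma non1_singular_DP_main_clause:
  assumes mu: "min_unsat F" and only_C: "{E\<in>F. x \<in> E} = {C}" and x: "2 \<le> ldeg F (comp x)"
    and y: "var y \<noteq> var x" "y \<notin> C" "ldeg F y = 1" "2 \<le> ldeg F (comp y)"
  shows "non1_singular (DP (var x) F) (var y)"
proof -
  have "ldeg (DP (var x) F) y = 1"
    using ldeg_DP_notin_main_clause[OF mu only_C y(1,2)] y(3) by simp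
  moreover have "2 \<le> ldeg (DP (var x) F) (comp y)"
    using ldeg_DP_lower_bound[OF mu only_C _ x] y by simp
  ultimately show ?thesis
    unfolding non1_singular_def singular_var_iff one_singular_var_iff by simp
qed

theorem lemma37:
  fixes F :: "'v clause set" and v w :: 'v
  assumes "min_unsat F"
    and "v \<noteq> w"
    and "non1_singular F v" and "non1_singular F w"
  shows "(main_clause F v = main_clause F w \<longrightarrow>
            \<not> singular (DP v F) w \<and> \<not> singular (DP w F) v)
       \<and> (main_clause F v \<noteq> main_clause F w \<longrightarrow>
            non1_singular (DP v F) w \<and> non1_singular (DP w F) v)"
proof -
  obtain x where x: "var x = v" "{E\<in>F. x \<in> E} = {main_clause F v}" "ldeg F x = 1"
      "2 \<le> ldeg F (comp x)"
    using non1_singular_main_clause[OF assms(3)] .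
  obtain y where y: "var y = w" "{E\<in>F. y \<in> E} = {main_clause F w}" "ldeg F y = 1"
      "2 \<le> ldeg F (comp y)"
    using non1_singular_main_clause[OF assms(4)] .
  have "x \<in> main_clause F w \<longleftrightarrow> main_clause F v = main_clause F w"
    "y \<in> main_clause F v \<longleftrightarrow> main_clause F v = main_clause F w"
    using x(2) y(2) by blast+
  then show ?thesis
    using not_singular_DP_main_clause[OF assms(1) x(2,4), of y]
      not_singular_DP_main_clause[OF assms(1) y(2,4), of x]
      non1_singular_DP_main_clause[OF assms(1) x(2,4), of y]
      non1_singular_DP_main_clause[OF assms(1) y(2,4), of x]
      x y assms(2) by auto
qed

end
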